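(* If $h\in I$ satisfies $\beta(h)=b$ (i.e. $h$ solves WFP), then $(\theta_1,\dots,\theta_k)=(\theta_1(h),\dots,\theta_k(h))$ is a solution of CAP.
   Context: Let $s:[0,B]\to[0,\infty)$ satisfy $s(0)=0$, be strictly increasing, strictly concave, differentiable, with $s'$ continuous on $[0,B]$ (so $s'>0$ is strictly decreasing). Fix $b\in(0,B]$, an integer $k\ge2$, and constants $c_1\ge c_2\ge\cdots\ge c_k>0$. The Constrained Allocation Problem (CAP) is: find $\theta_1,\dots,\theta_k\ge0$ such that (i) $\theta_1+\cdots+\theta_k=b$; (ii) $\theta_1\le\theta_2\le\cdots\le\theta_k$; (iii) $s'(\theta_j)/s'(\theta_i)=c_j/c_i$ whenever $i<j$ and $\theta_j\ge\theta_i>0$; (iv) $s'(\theta_j)/s'(0)\ge c_j/c_i$ whenever $i<j$ and $\theta_j>\theta_i=0$. Let $s'^{(-1)}:[s'(b),s'(0)]\to[0,b]$ denote the inverse of $s'$ restricted to $[0,b]$. An auxiliary function is a continuous, strictly decreasing function $g:I\to\mathbb{R}$ on an interval $I\subseteq\mathbb{R}$ for which there exist $h_{lo}<h_{hi}$ in $I$ with $g(h_{hi})\le s'(b)/c_1$ and $g(h_{lo})\ge s'(0)/c_k$. For $i=1,\dots,k$ and $h\in I$ define $\theta_i(h)=0$ if $c_ig(h)\ge s'(0)$; $\theta_i(h)=s'^{(-1)}(c_ig(h))$ if $s'(b)<c_ig(h)<s'(0)$; and $\theta_i(h)=b$ if $c_ig(h)\le s'(b)$. Let $\beta(h)=\sum_{i=1}^k\theta_i(h)$.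 The Water-Filling Problem (WFP) is: find $h\in I$ with $\beta(h)=b$. *)

theory Defs
  imports "HOL-Analysis.Analysis"
begin

definition strict_concave_on :: "real set \<Rightarrow> (real \<Rightarrow> real) \<Rightarrow> bool" where
  "strict_concave_on S f \<longleftrightarrow>
     (\<forall>x\<in>S. \<forall>y\<in>S. \<forall>t::real. x \<noteq> y \<and> 0 < t \<and> t < 1 \<longrightarrow>
        f ((1 - t) * x + t * y) > (1 - t) * f x + t * f y)"

definition sinv :: "(real \<Rightarrow> real) \<Rightarrow> real \<Rightarrow> real \<Rightarrow> real" where
  "sinv s' b y = inv_into {0..b} s' y"

definition theta_h :: "(real \<Rightarrow> real) \<Rightarrow> real \<Rightarrow> (nat \<Rightarrow> real) \<Rightarrow> (real \<Rightarrow> real) \<Rightarrow> nat \<Rightarrow> real \<Rightarrow> real" where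
  "theta_h s' b c g i h =
     (if c i * g h \<ge> s' 0 then 0
      else if c i * g h \<le> s' b then b
      else sinv s' b (c i * g h))"

definition beta :: "(real \<Rightarrow> real) \<Rightarrow> real \<Rightarrow> nat \<Rightarrow> (nat \<Rightarrow> real) \<Rightarrow> (real \<Rightarrow> real) \<Rightarrow> real \<Rightarrow> real" where
  "beta s' b k c g h = (\<Sum>i=1..k. theta_h s' b c g i h)"

definition auxiliary_function :: "(real \<Rightarrow> real) \<Rightarrow> real \<Rightarrow> real \<Rightarrow> nat \<Rightarrow> (nat \<Rightarrow> real) \<Rightarrow> real set \<Rightarrow> (real \<Rightarrow> real) \<Rightarrow> bool" where
  "auxiliary_function s' B b k c I g \<longleftrightarrow>
     is_interval I \<and> continuous_on I g \<and>
     (\<forall>x\<in>I. \<forall>y\<in>I. x < y \<longrightarrow> g y < g x) \<and>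
     (\<exists>hlo\<in>I. \<exists>hhi\<in>I. hlo < hhi \<and> g hhi \<le> s' b / c 1 \<and> g hlo \<ge> s' 0 / c k)"

definition CAP_solution :: "(real \<Rightarrow> real) \<Rightarrow> real \<Rightarrow> nat \<Rightarrow> (nat \<Rightarrow> real) \<Rightarrow> (nat \<Rightarrow> real) \<Rightarrow> bool" where
  "CAP_solution s' b k c \<theta> \<longleftrightarrow>
     (\<forall>i\<in>{1..k}. \<theta> i \<ge> 0) \<and>
     (\<Sum>i=1..k. \<theta> i) = b \<and>
     (\<forall>i\<in>{1..k}. \<forall>j\<in>{1..k}. i \<le> j \<longrightarrow> \<theta> i \<le> \<theta> j) \<and>
     (\<forall>i\<in>{1..k}. \<forall>j\<in>{1..k}. i < j \<and> \<theta> j \<ge> \<theta> i \<and> \<theta> i > 0 \<longrightarrow>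
        s' (\<theta> j) / s' (\<theta> i) = c j / c i) \<and>
     (\<forall>i\<in>{1..k}. \<forall>j\<in>{1..k}. i < j \<and> \<theta> j > \<theta> i \<and> \<theta> i = 0 \<longrightarrow>
        s' (\<theta> j) / s' 0 \<ge> c j / c i)"

end

theory Submission
  imports Defs
begin

text \<open>
  Put G = g h. By construction each \<open>\<theta>\<^sub>i = \<theta>\<^sub>i(h)\<close> lies in [0,b] and satisfies the complementary
  slackness conditions \<open>c\<^sub>i G \<le> s'(\<theta>\<^sub>i)\<close> if \<open>\<theta>\<^sub>i > 0\<close> and \<open>s'(\<theta>\<^sub>i) \<le> c\<^sub>i G\<close> if \<open>\<theta>\<^sub>i < b\<close>.
  Strict concavity makes s' strictly decreasing, and monotonicity of s makes it positive below b.
  As k \<ge> 2 and the \<open>\<theta>\<^sub>i\<close> sum to b, some \<open>\<theta>\<^sub>i\<close> is below b, whence G > 0. Then \<open>\<theta>\<^sub>j < \<theta>\<^sub>i\<close> for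
  i < j would give \<open>s'(\<theta>\<^sub>j) \<le> c\<^sub>j G \<le> c\<^sub>i G \<le> s'(\<theta>\<^sub>i) < s'(\<theta>\<^sub>j)\<close>; two positive \<open>\<theta>\<close>'s are
  both below b, so \<open>s'(\<theta>\<^sub>i) = c\<^sub>i G\<close> for both; and a zero allocation gives \<open>s'(0) \<le> c\<^sub>i G\<close>.
\<close>

text \<open>Unlike the library's \<open>convex_on_imp_above_tangent\<close>, this allows c on the boundary of A.\<close>

lemma concave_on_imp_below_tangent:
  fixes f :: "real \<Rightarrow> real"
  assumes conc: "concave_on A f" and c: "c \<in> A" and x: "x \<in> A"
    and deriv: "(f has_real_derivative D) (at c within A)"
  shows "f x - f c \<le> D * (x - c)"
proof -
  define \<gamma> where "\<gamma> t = c + t * (x - c)" for t :: real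
  have \<gamma>_eq: "\<gamma> t = (1 - t) *\<^sub>R c + t *\<^sub>R x" for t
    by (simp add: \<gamma>_def algebra_simps)
  have "\<gamma> ` {0..1} \<subseteq> A"
  proof
    fix y assume "y \<in> \<gamma> ` {0..1}"
    then obtain t where "0 \<le> t" "t \<le> 1" "y = (1 - t) *\<^sub>R c + t *\<^sub>R x"
      by (auto simp: \<gamma>_eq)
    then show "y \<in> A"
      using convexD[OF concave_on_imp_convex[OF conc] c x, of "1 - t" t] by simp
  qed
  then have "(f has_real_derivative D) (at (\<gamma> 0) within \<gamma> ` {0..1})"
    using deriv by (simp add: \<gamma>_def DERIV_subset)
  moreover have "(\<gamma> has_real_derivative x - c) (at 0 within {0..1})"
    unfolding \<gamma>_def by (auto intro!: derivative_eq_intros)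
  ultimately have "(f \<circ> \<gamma> has_real_derivative D * (x - c)) (at 0 within {0..1})"
    by (rule DERIV_image_chain)
  then have lim: "((\<lambda>t. (f (\<gamma> t) - f c) / t) \<longlongrightarrow> D * (x - c)) (at_right 0)"
    by (simp add: has_field_derivative_iff at_within_Icc_at_right \<gamma>_def)
  have "eventually (\<lambda>t. f x - f c \<le> (f (\<gamma> t) - f c) / t) (at_right 0)"
    using eventually_at_right_real[OF zero_less_one]
  proof eventually_elim
    case (elim t)
    then have "(1 - t) * f c + t * f x \<le> f (\<gamma> t)"
      using concave_onD[OF conc, of t c x] c x by (simp add: \<gamma>_eq)
    then show ?case
      using elim by (simp add: field_simps)
  qed
  then show ?thesis
    using tendsto_lowerbound[OF lim] by simp
qed

lemma concave_on_if_strict_concave_on: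
  assumes "strict_concave_on S f" "convex S"
  shows "concave_on S f"
  using assms by (intro concave_on_linorderI) (auto simp: strict_concave_on_def less_imp_le)

lemma strict_concave_on_deriv_strict_antimono:
  fixes f :: "real \<Rightarrow> real"
  assumes conc: "strict_concave_on S f" and S: "convex S"
    and deriv: "\<And>x. x \<in> S \<Longrightarrow> (f has_real_derivative f' x) (at x within S)"
  shows "strict_antimono_on S f'"
proof (rule monotone_onI)
  fix x y assume x: "x \<in> S" and y: "y \<in> S" and xy: "x < y"
  define m where "m = (x + y) / 2"
  have m: "m \<in> S"
    using convexD[OF S x y, of "1/2" "1/2"] by (simp add: m_def add_divide_distrib)
  have "(1 - 1/2) * f x + 1/2 * f y < f ((1 - 1/2) * x + 1/2 * y)"
    using x y xy by (intro conc[unfolded strict_concave_on_def, rule_format]) auto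
  then have mid: "f x + f y < 2 * f m"
    by (simp add: m_def field_simps)
  have "f m - f x \<le> f' x * (m - x)" and "f m - f y \<le> f' y * (m - y)"
    using concave_on_imp_below_tangent[OF concave_on_if_strict_concave_on[OF conc S]] deriv x y m
    by blast+
  then have "f' y * (y - x) < f' x * (y - x)"
    using mid by (simp add: m_def algebra_simps)
  then show "f' x > f' y"
    using xy by simp
qed

lemma concave_strict_mono_deriv_pos:
  fixes f :: "real \<Rightarrow> real"
  assumes "concave_on S f" "strict_mono_on S f" "x \<in> S" "y \<in> S" "x < y"
    and "(f has_real_derivative D) (at x within S)"
  shows "0 < D"
proof -
  have "0 < f y - f x"
    using assms by (simp add: strict_mono_onD)
  also have "\<dots> \<le> D * (y - x)"
    using assms by (intro concave_on_imp_below_tangent)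
  finally show ?thesis
    using \<open>x < y\<close> by (simp add: zero_less_mult_iff)
qed

lemma sinv_inverse:
  assumes "continuous_on {0..b} s'" "0 \<le> b" "s' b \<le> y" "y \<le> s' 0"
  shows "sinv s' b y \<in> {0..b}" "s' (sinv s' b y) = y"
proof -
  have "y \<in> s' ` {0..b}"
    using IVT2'[of s' b y 0] assms by force
  then show "sinv s' b y \<in> {0..b}" "s' (sinv s' b y) = y"
    unfolding sinv_def by (simp_all only: inv_into_into f_inv_into_f)
qed

context
  fixes s' :: "real \<Rightarrow> real" and b :: real and c :: "nat \<Rightarrow> real" and g :: "real \<Rightarrow> real"
  assumes s'_cont: "continuous_on {0..b} s'" and b_nonneg: "0 \<le> b"
begin

lemma theta_h_mem: "theta_h s' b c g i h \<in> {0..b}"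
  using sinv_inverse[OF s'_cont b_nonneg] b_nonneg by (simp add: theta_h_def)

lemma theta_h_pos_imp: "0 < theta_h s' b c g i h \<Longrightarrow> c i * g h \<le> s' (theta_h s' b c g i h)"
  using sinv_inverse[OF s'_cont b_nonneg] by (simp add: theta_h_def split: if_splits)

lemma theta_h_lt_imp: "theta_h s' b c g i h < b \<Longrightarrow> s' (theta_h s' b c g i h) \<le> c i * g h"
  using sinv_inverse[OF s'_cont b_nonneg] by (simp add: theta_h_def split: if_splits)

end

locale water_level =
  fixes s' :: "real \<Rightarrow> real" and b :: real and k :: nat and c :: "nat \<Rightarrow> real"
    and \<theta> :: "nat \<Rightarrow> real" and G :: real
  assumes b_pos: "0 < b"
    and s'_strict_antimono: "strict_antimono_on {0..b} s'"
    and s'_pos: "\<And>x. 0 \<le> x \<Longrightarrow> x < b \<Longrightarrow> 0 < s' x"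
    and k: "2 \<le> k"
    and c_antimono: "\<And>i j. i \<in> {1..k} \<Longrightarrow> j \<in> {1..k} \<Longrightarrow> i \<le> j \<Longrightarrow> c j \<le> c i"
    and c_pos: "\<And>i. i \<in> {1..k} \<Longrightarrow> 0 < c i"
    and \<theta>_mem: "\<And>i. i \<in> {1..k} \<Longrightarrow> \<theta> i \<in> {0..b}"
    and \<theta>_pos_imp: "\<And>i. i \<in> {1..k} \<Longrightarrow> 0 < \<theta> i \<Longrightarrow> c i * G \<le> s' (\<theta> i)"
    and \<theta>_lt_imp: "\<And>i. i \<in> {1..k} \<Longrightarrow> \<theta> i < b \<Longrightarrow> s' (\<theta> i) \<le> c i * G"
    and \<theta>_sum: "(\<Sum>i=1..k. \<theta> i) = b"
begin

lemma exists_lt_budget: "\<exists>i\<in>{1..k}. \<theta> i < b"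
proof (rule ccontr)
  assume "\<not> ?thesis"
  then have "\<theta> i = b" if "i \<in> {1..k}" for i
    using \<theta>_mem[OF that] that by force
  then have "(\<Sum>i=1..k. \<theta> i) = real k * b"
    by simp
  moreover have "b < real k * b"
    using k b_pos by simp
  ultimately show False
    using \<theta>_sum by linarith
qed

lemma level_pos: "0 < G"
proof -
  obtain i where i: "i \<in> {1..k}" "\<theta> i < b"
    using exists_lt_budget by blast
  then have "0 < c i * G"
    using s'_pos \<theta>_mem \<theta>_lt_imp by (meson atLeastAtMost_iff order_less_le_trans)
  then show ?thesis
    using c_pos[OF i(1)] by (simp add: zero_less_mult_iff)
qed

lemma pair_sum_le_budget:
  assumes "i \<in> {1..k}" "j \<in> {1..k}" "i \<noteq> j"
  shows "\<theta> i + \<theta> j \<le> b"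
proof -
  have "(\<Sum>l\<in>{i,j}. \<theta> l) \<le> (\<Sum>l=1..k. \<theta> l)"
    using assms \<theta>_mem by (intro sum_mono2) auto
  then show ?thesis
    using assms \<theta>_sum by simp
qed

lemma allocation_mono:
  assumes ij: "i \<in> {1..k}" "j \<in> {1..k}" "i \<le> j"
  shows "\<theta> i \<le> \<theta> j"
proof (rule ccontr)
  assume "\<not> \<theta> i \<le> \<theta> j"
  then have lt: "\<theta> j < \<theta> i" by simp
  have "s' (\<theta> j) \<le> c j * G"
    using lt \<theta>_mem[OF ij(1)] by (intro \<theta>_lt_imp[OF ij(2)]) auto
  also have "\<dots> \<le> c i * G"
    using c_antimono[OF ij] level_pos by simp
  also have "\<dots> \<le> s' (\<theta> i)"
    using lt \<theta>_mem[OF ij(2)] by (intro \<theta>_pos_imp[OF ij(1)]) auto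
  also have "\<dots> < s' (\<theta> j)"
    using s'_strict_antimono lt \<theta>_mem ij by (auto intro: monotone_onD)
  finally show False by simp
qed

lemma marginal_eq_level:
  "i \<in> {1..k} \<Longrightarrow> 0 < \<theta> i \<Longrightarrow> \<theta> i < b \<Longrightarrow> s' (\<theta> i) = c i * G"
  using \<theta>_pos_imp \<theta>_lt_imp by (simp add: order_antisym)

lemma CAP_solution: "CAP_solution s' b k c \<theta>"
  unfolding CAP_solution_def
proof (intro conjI ballI impI)
  show "0 \<le> \<theta> i" if "i \<in> {1..k}" for i
    using \<theta>_mem[OF that] by simp
  show "(\<Sum>i=1..k. \<theta> i) = b"
    by (rule \<theta>_sum)
  show "\<theta> i \<le> \<theta> j" if "i \<in> {1..k}" "j \<in> {1..k}" "i \<le> j" for i j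
    using allocation_mono that .
next
  fix i j assume ij: "i \<in> {1..k}" "j \<in> {1..k}" and "i < j \<and> \<theta> i \<le> \<theta> j \<and> 0 < \<theta> i"
  then have "i < j" "0 < \<theta> i" "0 < \<theta> j"
    by auto
  moreover have "\<theta> i + \<theta> j \<le> b"
    using pair_sum_le_budget ij \<open>i < j\<close> by simp
  ultimately have "s' (\<theta> i) = c i * G" "s' (\<theta> j) = c j * G"
    using marginal_eq_level ij by auto
  then show "s' (\<theta> j) / s' (\<theta> i) = c j / c i"
    using level_pos by simp
next
  fix i j assume ij: "i \<in> {1..k}" "j \<in> {1..k}" and "i < j \<and> \<theta> i < \<theta> j \<and> \<theta> i = 0"
  then have \<theta>i: "\<theta> i = 0" and \<theta>j: "0 < \<theta> j"
    by auto
  have ci: "0 < c i" and cj: "0 < c j"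
    using c_pos ij by auto
  have "s' 0 \<le> c i * G"
    using \<theta>_lt_imp[OF ij(1)] \<theta>i b_pos by simp
  then have "c j * s' 0 \<le> c i * (c j * G)"
    using cj by (simp add: mult.left_commute)
  also have "\<dots> \<le> c i * s' (\<theta> j)"
    using \<theta>_pos_imp[OF ij(2) \<theta>j] ci by simp
  finally show "c j / c i \<le> s' (\<theta> j) / s' 0"
    using ci s'_pos[of 0] b_pos by (simp add: divide_simps mult.commute)
qed

end

theorem proposition2:
  fixes s s' :: "real \<Rightarrow> real" and B b :: real and k :: nat
    and c :: "nat \<Rightarrow> real" and g :: "real \<Rightarrow> real" and I :: "real set" and h :: real
  assumes s0: "s 0 = 0"
    and s_nonneg: "\<forall>x\<in>{0..B}. s x \<ge> 0"
    and s_mono: "strict_mono_on {0..B} s"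
    and s_concave: "strict_concave_on {0..B} s"
    and s_deriv: "\<forall>x\<in>{0..B}. (s has_real_derivative s' x) (at x within {0..B})"
    and s'_cont: "continuous_on {0..B} s'"
    and b: "0 < b" "b \<le> B"
    and k: "k \<ge> 2"
    and c_mono: "\<forall>i\<in>{1..k}. \<forall>j\<in>{1..k}. i \<le> j \<longrightarrow> c j \<le> c i"
    and c_pos: "\<forall>i\<in>{1..k}. c i > 0"
    and aux: "auxiliary_function s' B b k c I g"
    and hI: "h \<in> I"
    and wfp: "beta s' b k c g h = b"
  shows "CAP_solution s' b k c (\<lambda>i. theta_h s' b c g i h)"
proof -
  have s_concave_on: "concave_on {0..B} s"
    using s_concave by (simp add: concave_on_if_strict_concave_on)
  have "strict_antimono_on {0..B} s'"
    using s_concave s_deriv by (intro strict_concave_on_deriv_strict_antimono) auto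
  then have "strict_antimono_on {0..b} s'"
    by (rule monotone_on_subset) (use b in auto)
  moreover have "0 < s' x" if "0 \<le> x" "x < b" for x
    using that b s_deriv
    by (intro concave_strict_mono_deriv_pos[OF s_concave_on s_mono, of x b]) auto
  moreover have "continuous_on {0..b} s'"
    using s'_cont by (rule continuous_on_subset) (use b in auto)
  \<comment> \<open>Only the value g h matters: that g is an auxiliary function and h \<in> I serve the
    existence of a WFP solution.\<close>
  ultimately interpret water_level s' b k c "\<lambda>i. theta_h s' b c g i h" "g h"
    using b k c_mono c_pos wfp theta_h_mem theta_h_pos_imp theta_h_lt_imp
    by unfold_locales (auto simp: beta_def)
  show ?thesis
    by (rule CAP_solution)
qed

end
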